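(* Let $\mathcal{I}$ be an interval hypergraph on $[n]$ closed under intersection. Then for every $j\in\mathcal{J}_{\mathcal{I}}$, the acyclic orientation $A_j$ is join irreducible in the lattice $P_{\mathcal{I}}$.
   Context: An interval hypergraph $\mathcal{I}$ on $[n]$ is a collection of intervals of $[n]$ containing all singletons; it is closed under intersection if $I,J\in\mathcal{I}$, $I\cap J\ne\varnothing$ imply $I\cap J\in\mathcal{I}$. An orientation is a map $O:\mathcal{I}\to[n]$ with $O(I)\in I$; it is acyclic if there are no $H_1,\dots,H_k$, $k\ge2$, with $O(H_{i+1})\in H_i\setminus\{O(H_i)\}$ for $i\in[k-1]$ and $O(H_1)\in H_k\setminus\{O(H_k)\}$. Orientations $O\ne O'$ are related by an increasing flip (from $O$ to $O'$) if there exist $1\le i<j\le n$ such that for all $H$: if $O(H)\ne O'(H)$ then $O(H)=i$, $O'(H)=j$; and if $\{i,j\}\subseteq H$ then $O(H)=i\iff O'(H)=j$. $P_{\mathcal{I}}$ is the transitive closure of the increasing flip relation on acyclic orientations (a lattice here). Let $\mathcal{J}_{\mathcal{I}}=\bigcup_{I\in\mathcal{I}}I\setminus\{\min I\}$. For $j\in\mathcal{J}_{\mathcal{I}}$ let $J_j=\bigcap\{I\in\mathcal{I}: j\in I\setminus\{\min I\}\}$ and $\mu_j=\min J_j$. For a permutation $\pi$, $\mathrm{Or}_\pi(I)=\pi(\min\{k:\pi(k)\in I\})$. Define $A_j=\mathrm{Or}_\pi$ for the permutation $\pi=1\,2\cdots(\mu_j-1)\,j\,\mu_j\cdots(j-1)\,(j+1)\cdots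 n$ (one-line notation); explicitly $A_j(J)=j$ if $j\in J$ and $\min J=\mu_j$, and $A_j(J)=\min J$ otherwise. An element of a lattice is join irreducible if it is not the minimum and covers exactly one element. *)

theory Defs
  imports Main "HOL-Library.FuncSet"
begin

definition intervals_of :: "nat \<Rightarrow> nat set set" where
  "intervals_of n = {{a..b} | a b. 1 \<le> a \<and> a \<le> b \<and> b \<le> n}"

definition interval_hypergraph :: "nat \<Rightarrow> nat set set \<Rightarrow> bool" where
  "interval_hypergraph n \<I> \<longleftrightarrow> \<I> \<subseteq> intervals_of n \<and> (\<forall>i\<in>{1..n}. {i} \<in> \<I>)"

definition closed_under_intersection :: "nat set set \<Rightarrow> bool" where
  "closed_under_intersection \<I> \<longleftrightarrow>
     (\<forall>I\<in>\<I>. \<forall>J\<in>\<I>. I \<inter> J \<noteq> {} \<longrightarrow> I \<inter> J \<in> \<I>)"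

definition orientations :: "nat set set \<Rightarrow> (nat set \<Rightarrow> nat) set" where
  "orientations \<I> = (\<Pi>\<^sub>E I\<in>\<I>. I)"

definition acyclic_orientation :: "nat set set \<Rightarrow> (nat set \<Rightarrow> nat) \<Rightarrow> bool" where
  "acyclic_orientation \<I> Ori \<longleftrightarrow> Ori \<in> orientations \<I> \<and>
     \<not> (\<exists>Hs. length Hs \<ge> 2 \<and> set Hs \<subseteq> \<I> \<and>
           (\<forall>i. i + 1 < length Hs \<longrightarrow> Ori (Hs ! (i + 1)) \<in> Hs ! i - {Ori (Hs ! i)}) \<and>
           Ori (Hs ! 0) \<in> last Hs - {Ori (last Hs)})"

definition increasing_flip :: "nat \<Rightarrow> nat set set \<Rightarrow> (nat set \<Rightarrow> nat) \<Rightarrow> (nat set \<Rightarrow> nat) \<Rightarrow> bool" where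
  "increasing_flip n \<I> Ori Q \<longleftrightarrow> Ori \<noteq> Q \<and>
     (\<exists>i j. 1 \<le> i \<and> i < j \<and> j \<le> n \<and>
        (\<forall>H\<in>\<I>. (Ori H \<noteq> Q H \<longrightarrow> Ori H = i \<and> Q H = j) \<and>
                 ({i, j} \<subseteq> H \<longrightarrow> (Ori H = i \<longleftrightarrow> Q H = j))))"

definition P_carrier :: "nat set set \<Rightarrow> (nat set \<Rightarrow> nat) set" where
  "P_carrier \<I> = {Ori. acyclic_orientation \<I> Ori}"

definition flip_rel :: "nat \<Rightarrow> nat set set \<Rightarrow> ((nat set \<Rightarrow> nat) \<times> (nat set \<Rightarrow> nat)) set" where
  "flip_rel n \<I> = {(Ori, Q). Ori \<in> P_carrier \<I> \<and> Q \<in> P_carrier \<I> \<and> increasing_flip n \<I> Ori Q}"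

definition P_le :: "nat \<Rightarrow> nat set set \<Rightarrow> (nat set \<Rightarrow> nat) \<Rightarrow> (nat set \<Rightarrow> nat) \<Rightarrow> bool" where
  "P_le n \<I> Ori Q \<longleftrightarrow> Ori \<in> P_carrier \<I> \<and> Q \<in> P_carrier \<I> \<and>
     (Ori = Q \<or> (Ori, Q) \<in> (flip_rel n \<I>)\<^sup>+)"

definition covers :: "'a set \<Rightarrow> ('a \<Rightarrow> 'a \<Rightarrow> bool) \<Rightarrow> 'a \<Rightarrow> 'a \<Rightarrow> bool" where
  "covers C le x y \<longleftrightarrow> x \<in> C \<and> y \<in> C \<and> le y x \<and> y \<noteq> x \<and>
     \<not> (\<exists>z\<in>C. le y z \<and> y \<noteq> z \<and> le z x \<and> z \<noteq> x)"

definition join_irreducible :: "'a set \<Rightarrow> ('a \<Rightarrow> 'a \<Rightarrow> bool) \<Rightarrow> 'a \<Rightarrow> bool" where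
  "join_irreducible C le x \<longleftrightarrow> x \<in> C \<and> \<not> (\<forall>y\<in>C. le x y) \<and> (\<exists>!y. covers C le x y)"

definition JJ :: "nat set set \<Rightarrow> nat set" where
  "JJ \<I> = (\<Union>I\<in>\<I>. I - {Min I})"

definition J_of :: "nat set set \<Rightarrow> nat \<Rightarrow> nat set" where
  "J_of \<I> j = \<Inter> {I \<in> \<I>. j \<in> I - {Min I}}"

definition mu :: "nat set set \<Rightarrow> nat \<Rightarrow> nat" where
  "mu \<I> j = Min (J_of \<I> j)"

text \<open>Or_pi for a permutation pi of [n] given in one-line notation as a list:
  the first entry of pi lying in I.\<close>
definition Or_perm :: "nat set set \<Rightarrow> nat list \<Rightarrow> nat set \<Rightarrow> nat" where
  "Or_perm \<I> \<pi> = restrict (\<lambda>I. hd (filter (\<lambda>x. x \<in> I) \<pi>)) \<I>"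

definition perm_A :: "nat \<Rightarrow> nat set set \<Rightarrow> nat \<Rightarrow> nat list" where
  "perm_A n \<I> j = [1..<mu \<I> j] @ [j] @ [mu \<I> j..<j] @ [j+1..<n+1]"

definition A_or :: "nat \<Rightarrow> nat set set \<Rightarrow> nat \<Rightarrow> nat set \<Rightarrow> nat" where
  "A_or n \<I> j = Or_perm \<I> (perm_A n \<I> j)"

end

theory Submission
  imports Defs
begin

(* Let redirect i be the orientation that sends every hyperedge H with j \<in> H and min H = mu_j
   to i and every other hyperedge to its minimum, so that redirect mu_j is the minimum
   orientation and redirect j = A_j.  An increasing flip into A_j can only move the value j on
   exactly these hyperedges down to some i, so the flip predecessors of A_j are the acyclic
   redirect i with mu_j \<le> i < j.  These form a chain: if redirect a and redirect b (a < b) were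
   not related by a flip, some H with min H = a containing b would form a 2-cycle with J_j in
   redirect b.  Hence everything strictly below A_j lies below the largest acyclic redirect i,
   which is then its unique lower cover, and A_j is not the minimum because A_j(J_j) = j > mu_j. *)

lemma acyclic_orientation_if_rank:
  fixes rank :: "nat \<Rightarrow> nat"
  assumes "Q \<in> orientations \<I>"
    and rank_less: "\<And>H x. H \<in> \<I> \<Longrightarrow> x \<in> H \<Longrightarrow> x \<noteq> Q H \<Longrightarrow> rank (Q H) < rank x"
  shows "acyclic_orientation \<I> Q"
proof -
  have False
    if len: "length Hs \<ge> 2" and Hs: "set Hs \<subseteq> \<I>"
      and step: "\<forall>i. i + 1 < length Hs \<longrightarrow> Q (Hs ! (i + 1)) \<in> Hs ! i - {Q (Hs ! i)}"
      and wraps: "Q (Hs ! 0) \<in> last Hs - {Q (last Hs)}" for Hs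
  proof -
    have grow: "rank (Q (Hs ! 0)) + k \<le> rank (Q (Hs ! k))" if "k < length Hs" for k
      using that
    proof (induction k)
      case (Suc k)
      then have "Hs ! k \<in> \<I>" using Hs by (meson Suc_lessD nth_mem subset_iff)
      with Suc step rank_less[of "Hs ! k" "Q (Hs ! Suc k)"] show ?case by auto
    qed simp
    have "last Hs = Hs ! (length Hs - 1)" using len by (intro last_conv_nth) auto
    then have "rank (Q (Hs ! 0)) + (length Hs - 1) \<le> rank (Q (last Hs))"
      using grow[of "length Hs - 1"] len by simp
    then have "rank (Q (Hs ! 0)) < rank (Q (last Hs))" using len by linarith
    moreover have "last Hs \<in> \<I>"
      using Hs len by (metis last_in_set list.size(3) not_numeral_le_zero subsetD)
    ultimately show False using wraps rank_less by fastforce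
  qed
  then show ?thesis using assms(1) unfolding acyclic_orientation_def by blast
qed

lemma acyclic_orientation_no_2_cycle:
  assumes "acyclic_orientation \<I> Q" and "H \<in> \<I>" "K \<in> \<I>"
    and "Q K \<in> H - {Q H}" "Q H \<in> K - {Q K}"
  shows False
proof -
  have "length [H, K] \<ge> 2 \<and> set [H, K] \<subseteq> \<I> \<and>
    (\<forall>i. i + 1 < length [H, K] \<longrightarrow> Q ([H, K] ! (i + 1)) \<in> [H, K] ! i - {Q ([H, K] ! i)}) \<and>
    Q ([H, K] ! 0) \<in> last [H, K] - {Q (last [H, K])}"
    using assms(2-) by auto
  then show False using assms(1) unfolding acyclic_orientation_def by blast
qed

lemma orientations_ext:
  "Q \<in> orientations \<I> \<Longrightarrow> Q' \<in> orientations \<I> \<Longrightarrow> (\<And>H. H \<in> \<I> \<Longrightarrow> Q H = Q' H) \<Longrightarrow> Q = Q'"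
  unfolding orientations_def by (rule PiE_ext)

lemma flip_rel_le_pointwise:
  assumes "(Q, Q') \<in> flip_rel n \<I>" "H \<in> \<I>"
  shows "Q H \<le> Q' H"
proof -
  obtain i k where "i < k" "Q H \<noteq> Q' H \<longrightarrow> Q H = i \<and> Q' H = k"
    using assms unfolding flip_rel_def increasing_flip_def by blast
  then show ?thesis by (cases "Q H = Q' H") auto
qed

lemma P_le_le_pointwise:
  assumes "P_le n \<I> Q Q'" "H \<in> \<I>"
  shows "Q H \<le> Q' H"
proof -
  have "(Q, Q') \<in> (flip_rel n \<I>)\<^sup>*" using assms(1) unfolding P_le_def by auto
  then show ?thesis
  proof induction
    case (step Q'' Q')
    then show ?case using flip_rel_le_pointwise[OF step(2) assms(2)] by simp
  qed simp
qed

lemma P_le_antisym: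
  assumes "P_le n \<I> Q Q'" "P_le n \<I> Q' Q"
  shows "Q = Q'"
proof -
  have "Q \<in> orientations \<I>" "Q' \<in> orientations \<I>"
    using assms unfolding P_le_def P_carrier_def acyclic_orientation_def by auto
  then show ?thesis
  proof (rule orientations_ext)
    fix H assume "H \<in> \<I>"
    then show "Q H = Q' H" using assms P_le_le_pointwise by (meson antisym)
  qed
qed

lemma unique_lower_cover_if_predecessors_chain:
  fixes f :: "nat \<Rightarrow> 'a"
  assumes le_iff: "\<And>y z. le y z \<longleftrightarrow> y \<in> C \<and> z \<in> C \<and> (y = z \<or> (y, z) \<in> R\<^sup>+)"
    and R_sub: "R \<subseteq> C \<times> C" and irrefl: "(x, x) \<notin> R"
    and antisym: "\<And>y z. le y z \<Longrightarrow> le z y \<Longrightarrow> y = z"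
    and preds: "{y. (y, x) \<in> R} = f ` V" and "finite V" "V \<noteq> {}"
    and chain: "\<And>a b. a \<in> V \<Longrightarrow> b \<in> V \<Longrightarrow> a < b \<Longrightarrow> le (f a) (f b)"
  shows "\<exists>!y. covers C le x y"
proof -
  have le_trans: "le y w" if "le y z" "le z w" for y z w
    using that unfolding le_iff by (meson trancl_trans)
  define s where "s = f (Max V)"
  have "(s, x) \<in> R" using Max_in[OF \<open>finite V\<close> \<open>V \<noteq> {}\<close>] preds unfolding s_def by auto
  then have "s \<in> C" "x \<in> C" "s \<noteq> x" "le s x" using R_sub irrefl le_iff by auto
  have below_s: "le y s" if "le y x" "y \<noteq> x" for y
  proof -
    have "(y, x) \<in> R\<^sup>+" using that le_iff by auto
    then obtain z where "(y, z) \<in> R\<^sup>*" "(z, x) \<in> R" by (meson tranclD2)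
    then have "le y z" using that R_sub le_iff by (auto simp: rtrancl_eq_or_trancl)
    moreover obtain v where "v \<in> V" "z = f v" using \<open>(z, x) \<in> R\<close> preds by auto
    have "le z s"
    proof (cases "v = Max V")
      case True
      then show ?thesis using \<open>s \<in> C\<close> le_iff unfolding s_def \<open>z = f v\<close> by simp
    next
      case False
      then have "v < Max V" using Max_ge[OF \<open>finite V\<close> \<open>v \<in> V\<close>] by simp
      then show ?thesis using chain[OF \<open>v \<in> V\<close> Max_in[OF \<open>finite V\<close> \<open>V \<noteq> {}\<close>]]
        unfolding s_def \<open>z = f v\<close> by blast
    qed
    ultimately show ?thesis by (rule le_trans)
  qed
  have "covers C le x s"
    unfolding covers_def using \<open>s \<in> C\<close> \<open>x \<in> C\<close> \<open>s \<noteq> x\<close> \<open>le s x\<close> below_s antisym by blast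
  moreover have "y = s" if "covers C le x y" for y
    using that below_s \<open>s \<in> C\<close> \<open>s \<noteq> x\<close> \<open>le s x\<close> unfolding covers_def by blast
  ultimately show ?thesis by blast
qed

lemma Inter_in_if_closed_under_intersection:
  assumes "closed_under_intersection \<I>" and "finite F" "F \<noteq> {}" "F \<subseteq> \<I>" "x \<in> \<Inter>F"
  shows "\<Inter>F \<in> \<I>"
  using assms(2-)
proof (induction F rule: finite_ne_induct)
  case (insert H F)
  then have "H \<inter> \<Inter>F \<noteq> {}" by blast
  with insert show ?case using assms(1) unfolding closed_under_intersection_def by auto
qed simp

lemma filter_atLeastAtMost_upt:
  "filter (\<lambda>x. x \<in> {a..b}) [l..<m] = [max l a..<min m (Suc b)]"
proof (induction m)
  case (Suc m)
  then show ?case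
    by (cases "l \<le> m"; cases "a \<le> m"; cases "m \<le> b") (auto simp: max_def min_def le_Suc_eq)
qed simp

lemma Min_atLeastAtMost: "a \<le> b \<Longrightarrow> Min {a..b} = (a :: nat)"
  by (rule Min_eqI) auto

locale interval_hypergraph_JJ_element =
  fixes n :: nat and \<I> :: "nat set set" and j :: nat
  assumes hypergraph: "interval_hypergraph n \<I>"
    and closed: "closed_under_intersection \<I>"
    and j_in_JJ: "j \<in> JJ \<I>"
begin

abbreviation J_j :: "nat set" where "J_j \<equiv> J_of \<I> j"
abbreviation mu_j :: nat where "mu_j \<equiv> mu \<I> j"

lemma edge_interval:
  assumes "H \<in> \<I>"
  obtains a b where "H = {a..b}" "1 \<le> a" "a \<le> b" "b \<le> n"
  using assms hypergraph unfolding interval_hypergraph_def intervals_of_def by blast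

lemma edge_Min_in: "H \<in> \<I> \<Longrightarrow> Min H \<in> H"
  by (metis edge_interval Min_in atLeastAtMost_iff empty_iff finite_atLeastAtMost order_refl)

lemma edge_Min_le: "H \<in> \<I> \<Longrightarrow> x \<in> H \<Longrightarrow> Min H \<le> x"
  by (metis edge_interval Min_le finite_atLeastAtMost)

lemma edge_Min_ge_1: "H \<in> \<I> \<Longrightarrow> 1 \<le> Min H"
  by (metis edge_interval edge_Min_in atLeastAtMost_iff order_trans)

lemma edge_le_n: "H \<in> \<I> \<Longrightarrow> x \<in> H \<Longrightarrow> x \<le> n"
  by (metis edge_interval atLeastAtMost_iff order_trans)

lemma edge_convex: "H \<in> \<I> \<Longrightarrow> Min H \<le> x \<Longrightarrow> x \<le> y \<Longrightarrow> y \<in> H \<Longrightarrow> x \<in> H"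
  by (metis edge_interval edge_Min_in atLeastAtMost_iff order_trans)

lemma J_j_in: "J_j \<in> \<I>" and j_in_J_j: "j \<in> J_j" and pred_j_in_J_j: "j - 1 \<in> J_j"
proof -
  define F where "F = {H \<in> \<I>. j \<in> H - {Min H}}"
  have J_j_eq: "J_j = \<Inter>F" unfolding F_def J_of_def ..
  have "F \<subseteq> \<I>" "F \<noteq> {}" using j_in_JJ unfolding F_def JJ_def by auto
  have "\<I> \<subseteq> Pow {1..n}"
    using hypergraph unfolding interval_hypergraph_def intervals_of_def by auto
  then have "finite F"
    using \<open>F \<subseteq> \<I>\<close> by (meson finite_Pow_iff finite_atLeastAtMost finite_subset order_trans)
  have "j \<in> H \<and> j - 1 \<in> H" if "H \<in> F" for H
  proof -
    have "H \<in> \<I>" "j \<in> H" "Min H \<noteq> j" using that unfolding F_def by auto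
    then have "Min H \<le> j - 1" using edge_Min_le by fastforce
    then show ?thesis using edge_convex[OF \<open>H \<in> \<I>\<close> _ _ \<open>j \<in> H\<close>] \<open>j \<in> H\<close> by simp
  qed
  then show "j \<in> J_j" "j - 1 \<in> J_j" unfolding J_j_eq by auto
  then show "J_j \<in> \<I>" unfolding J_j_eq
    using Inter_in_if_closed_under_intersection[OF closed \<open>finite F\<close> \<open>F \<noteq> {}\<close> \<open>F \<subseteq> \<I>\<close>] by blast
qed

lemma mu_j_ge_1: "1 \<le> mu_j" and mu_j_less: "mu_j < j" and j_le_n: "j \<le> n"
proof -
  show "1 \<le> mu_j" unfolding mu_def using edge_Min_ge_1[OF J_j_in] .
  moreover have "mu_j \<le> j - 1" unfolding mu_def using edge_Min_le[OF J_j_in pred_j_in_J_j] .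
  ultimately show "mu_j < j" by linarith
  show "j \<le> n" using edge_le_n[OF J_j_in j_in_J_j] .
qed

lemma Min_J_j: "Min J_j = mu_j"
  unfolding mu_def ..

lemma Min_le_mu_j:
  assumes "H \<in> \<I>" "j \<in> H" "Min H < j"
  shows "Min H \<le> mu_j"
proof -
  have "J_j \<subseteq> H" using assms unfolding J_of_def by auto
  then show ?thesis using edge_Min_in[OF J_j_in] edge_Min_le[OF assms(1)] Min_J_j by auto
qed

lemma between_mu_j_and_j_in:
  assumes "H \<in> \<I>" "j \<in> H" "Min H = mu_j" "mu_j \<le> x" "x \<le> j"
  shows "x \<in> H"
  using assms edge_convex by auto

definition redirect :: "nat \<Rightarrow> nat set \<Rightarrow> nat" where
  "redirect i = restrict (\<lambda>H. if j \<in> H \<and> Min H = mu_j then i else Min H) \<I>"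

lemma redirect_apply:
  "H \<in> \<I> \<Longrightarrow> redirect i H = (if j \<in> H \<and> Min H = mu_j then i else Min H)"
  unfolding redirect_def by simp

lemma redirect_J_j: "redirect i J_j = i"
  using redirect_apply[OF J_j_in] j_in_J_j Min_J_j by simp

lemma redirect_in_orientations: "mu_j \<le> i \<Longrightarrow> i \<le> j \<Longrightarrow> redirect i \<in> orientations \<I>"
  unfolding orientations_def redirect_def
  using between_mu_j_and_j_in edge_Min_in by auto

lemma hd_filter_perm_A:
  assumes "H \<in> \<I>"
  shows "hd (filter (\<lambda>x. x \<in> H) (perm_A n \<I> j)) = (if j \<in> H \<and> Min H = mu_j then j else Min H)"
proof -
  obtain a b where H: "H = {a..b}" "1 \<le> a" "a \<le> b" "b \<le> n"
    using assms by (rule edge_interval)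
  have "Min H = a" using H by (simp add: Min_atLeastAtMost)
  have "hd (filter (\<lambda>x. x \<in> H) (perm_A n \<I> j)) = hd ([max 1 a..<min mu_j (Suc b)] @
      filter (\<lambda>x. x \<in> H) [j] @ [max mu_j a..<min j (Suc b)] @ [max (Suc j) a..<min (Suc n) (Suc b)])"
    unfolding perm_A_def H(1) filter_append filter_atLeastAtMost_upt by simp
  also have "\<dots> = (if j \<in> H \<and> Min H = mu_j then j else Min H)"
  proof -
    (* the cases locate the first element of H in the four blocks of perm_A *)
    consider "a < mu_j" | "mu_j \<le> a" "j \<in> H" | "mu_j \<le> a" "j \<notin> H" "a < j" | "j < a"
      using H(1,3) by (metis atLeastAtMost_iff le_refl linorder_neqE_nat not_less)
    then show ?thesis
    proof cases
      case 1
      then show ?thesis using H \<open>Min H = a\<close> by simp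
    next
      case 2
      moreover have "a \<le> j" using 2 H(1) by simp
      ultimately have "a = mu_j \<or> a = j"
        using Min_le_mu_j[OF assms] \<open>Min H = a\<close> by (cases "a < j") auto
      then show ?thesis using 2 H \<open>Min H = a\<close> by auto
    next
      case 3
      then show ?thesis using H \<open>Min H = a\<close> by (simp del: upt_Suc)
    next
      case 4
      then show ?thesis using H \<open>Min H = a\<close> mu_j_less by (simp del: upt_Suc)
    qed
  qed
  finally show ?thesis .
qed

lemma A_or_eq_redirect: "A_or n \<I> j = redirect j"
proof
  fix H
  show "A_or n \<I> j H = redirect j H"
    by (cases "H \<in> \<I>") (simp_all add: A_or_def Or_perm_def redirect_def hd_filter_perm_A)
qed

lemma redirect_mu_j_acyclic: "redirect mu_j \<in> P_carrier \<I>"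
  unfolding P_carrier_def mem_Collect_eq
proof (rule acyclic_orientation_if_rank[where rank = id])
  show "redirect mu_j \<in> orientations \<I>" using redirect_in_orientations mu_j_less by simp
  fix H x assume "H \<in> \<I>" "x \<in> H" "x \<noteq> redirect mu_j H"
  then show "id (redirect mu_j H) < id x" using redirect_apply edge_Min_le by fastforce
qed

lemma redirect_j_acyclic: "redirect j \<in> P_carrier \<I>"
  unfolding P_carrier_def mem_Collect_eq
proof (rule acyclic_orientation_if_rank)
  show "redirect j \<in> orientations \<I>" using redirect_in_orientations mu_j_less by simp
  fix H x assume H: "H \<in> \<I>" and x: "x \<in> H" "x \<noteq> redirect j H"
  (* j is ranked just below mu_j, as in the permutation perm_A defining A_j *)
  let ?rank = "\<lambda>y. if y = j then 2 * mu_j - 1 else 2 * y"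
  have "Min H \<le> x" using edge_Min_le[OF H x(1)] .
  show "?rank (redirect j H) < ?rank x"
  proof (cases "j \<in> H \<and> Min H = mu_j")
    case True
    then show ?thesis using x \<open>Min H \<le> x\<close> mu_j_ge_1 redirect_apply[OF H] by auto
  next
    case False
    then have "redirect j H = Min H" "Min H < x" using x \<open>Min H \<le> x\<close> redirect_apply[OF H] by auto
    moreover have "Min H < mu_j" if "x = j"
      using Min_le_mu_j[OF H] False x \<open>Min H < x\<close> that by fastforce
    ultimately show ?thesis using mu_j_less by auto
  qed
qed

lemma flip_redirect:
  assumes "mu_j \<le> a" "a < b" "b \<le> j"
    and acyclic: "redirect a \<in> P_carrier \<I>" "redirect b \<in> P_carrier \<I>"
  shows "(redirect a, redirect b) \<in> flip_rel n \<I>"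
proof -
  have "{a, b} \<subseteq> H \<longrightarrow> (redirect a H = a \<longleftrightarrow> redirect b H = b)" if H: "H \<in> \<I>" for H
  proof (cases "j \<in> H \<and> Min H = mu_j")
    case False
    have "Min H \<noteq> a" if "{a, b} \<subseteq> H"
    proof
      assume "Min H = a"
      then have "redirect b H \<in> J_j - {redirect b J_j}"
        using False assms(1-3) redirect_apply[OF H] redirect_J_j
          between_mu_j_and_j_in[OF J_j_in j_in_J_j Min_J_j] by auto
      moreover have "redirect b J_j \<in> H - {redirect b H}"
        using False \<open>Min H = a\<close> \<open>{a, b} \<subseteq> H\<close> \<open>a < b\<close> redirect_apply[OF H] redirect_J_j by auto
      ultimately show False
        using acyclic_orientation_no_2_cycle acyclic(2) J_j_in H unfolding P_carrier_def by blast
    qed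
    moreover have "Min H \<noteq> b" if "{a, b} \<subseteq> H" using that edge_Min_le[OF H] \<open>a < b\<close> by fastforce
    ultimately show ?thesis using False redirect_apply[OF H] by auto
  qed (simp add: redirect_apply[OF H])
  moreover have "redirect a \<noteq> redirect b" using redirect_J_j \<open>a < b\<close> by (metis less_irrefl)
  moreover have "1 \<le> a" "b \<le> n" using assms mu_j_ge_1 j_le_n by auto
  ultimately have "increasing_flip n \<I> (redirect a) (redirect b)"
    unfolding increasing_flip_def using \<open>a < b\<close>
    by (intro conjI exI[of _ a] exI[of _ b] ballI) (auto simp: redirect_apply)
  then show ?thesis unfolding flip_rel_def using acyclic by simp
qed

lemma flip_to_redirect_j:
  assumes "(Q, redirect j) \<in> flip_rel n \<I>"
  obtains i where "mu_j \<le> i" "i < j" "Q = redirect i"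
proof -
  have Q: "Q \<in> orientations \<I>" and "Q \<noteq> redirect j"
    using assms unfolding flip_rel_def P_carrier_def acyclic_orientation_def increasing_flip_def
    by auto
  then have Q_in: "Q H \<in> H" if "H \<in> \<I>" for H using that unfolding orientations_def by auto
  obtain i k where "i < k" and flip: "\<And>H. H \<in> \<I> \<Longrightarrow>
      (Q H \<noteq> redirect j H \<longrightarrow> Q H = i \<and> redirect j H = k) \<and>
      ({i, k} \<subseteq> H \<longrightarrow> (Q H = i \<longleftrightarrow> redirect j H = k))"
    using assms unfolding flip_rel_def increasing_flip_def by blast
  obtain H0 where H0: "H0 \<in> \<I>" "Q H0 \<noteq> redirect j H0"
    using orientations_ext[OF Q redirect_in_orientations[OF less_imp_le[OF mu_j_less] order_refl]]
      \<open>Q \<noteq> redirect j\<close> by blast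
  then have "Q H0 = i" "redirect j H0 = k" using flip by auto
  then have "redirect j H0 \<noteq> Min H0" using edge_Min_le[OF H0(1) Q_in[OF H0(1)]] \<open>i < k\<close> by simp
  then have "j \<in> H0" "Min H0 = mu_j" "k = j"
    using redirect_apply[OF H0(1)] \<open>redirect j H0 = k\<close> by metis+
  then have "mu_j \<le> i" "i < j"
    using edge_Min_le[OF H0(1) Q_in[OF H0(1)]] \<open>Q H0 = i\<close> \<open>i < k\<close> by auto
  have "Q H = redirect i H" if H: "H \<in> \<I>" for H
  proof (cases "j \<in> H \<and> Min H = mu_j")
    case True
    then have "{i, k} \<subseteq> H"
      using between_mu_j_and_j_in[OF H] \<open>mu_j \<le> i\<close> \<open>i < j\<close> \<open>k = j\<close> by auto
    then show ?thesis using flip[OF H] True redirect_apply[OF H] \<open>k = j\<close> by auto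
  next
    case False
    have "Q H = Min H"
    proof (rule ccontr)
      assume "Q H \<noteq> Min H"
      then have "Q H = i" "Min H = j" using flip[OF H] False redirect_apply[OF H] \<open>k = j\<close> by auto
      then show False using edge_Min_le[OF H Q_in[OF H]] \<open>i < j\<close> by simp
    qed
    then show ?thesis using False redirect_apply[OF H] by auto
  qed
  then have "Q = redirect i"
    using orientations_ext Q redirect_in_orientations \<open>mu_j \<le> i\<close> \<open>i < j\<close> by (metis less_imp_le)
  with \<open>mu_j \<le> i\<close> \<open>i < j\<close> show thesis by (rule that)
qed

lemma predecessors_redirect_j:
  "{Q. (Q, redirect j) \<in> flip_rel n \<I>} =
    redirect ` {i. mu_j \<le> i \<and> i < j \<and> redirect i \<in> P_carrier \<I>}"
proof (intro equalityI subsetI)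
  fix Q assume "Q \<in> {Q. (Q, redirect j) \<in> flip_rel n \<I>}"
  then have "(Q, redirect j) \<in> flip_rel n \<I>" by simp
  moreover from this have "Q \<in> P_carrier \<I>" unfolding flip_rel_def by simp
  ultimately show "Q \<in> redirect ` {i. mu_j \<le> i \<and> i < j \<and> redirect i \<in> P_carrier \<I>}"
    by (elim flip_to_redirect_j) auto
next
  fix Q assume "Q \<in> redirect ` {i. mu_j \<le> i \<and> i < j \<and> redirect i \<in> P_carrier \<I>}"
  then show "Q \<in> {Q. (Q, redirect j) \<in> flip_rel n \<I>}"
    using flip_redirect redirect_j_acyclic by auto
qed

lemma redirect_j_join_irreducible: "join_irreducible (P_carrier \<I>) (P_le n \<I>) (redirect j)"
proof -
  let ?V = "{i. mu_j \<le> i \<and> i < j \<and> redirect i \<in> P_carrier \<I>}"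
  have not_least: "\<not> P_le n \<I> (redirect j) (redirect mu_j)"
    using P_le_le_pointwise[OF _ J_j_in] redirect_J_j mu_j_less by (metis not_less)
  have "\<exists>!Q. covers (P_carrier \<I>) (P_le n \<I>) (redirect j) Q"
  proof (rule unique_lower_cover_if_predecessors_chain[OF P_le_def])
    show "flip_rel n \<I> \<subseteq> P_carrier \<I> \<times> P_carrier \<I>" unfolding flip_rel_def by auto
    show "(redirect j, redirect j) \<notin> flip_rel n \<I>" unfolding flip_rel_def increasing_flip_def by simp
    show "Q = Q'" if "P_le n \<I> Q Q'" "P_le n \<I> Q' Q" for Q Q' using that by (rule P_le_antisym)
    show "{Q. (Q, redirect j) \<in> flip_rel n \<I>} = redirect ` ?V" by (rule predecessors_redirect_j)
    show "finite ?V" by (rule finite_subset[of _ "{..<j}"]) auto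
    show "?V \<noteq> {}" using redirect_mu_j_acyclic mu_j_less by auto
    show "P_le n \<I> (redirect a) (redirect b)" if "a \<in> ?V" "b \<in> ?V" "a < b" for a b
      using flip_redirect that unfolding P_le_def by auto
  qed
  then show ?thesis
    unfolding join_irreducible_def using redirect_j_acyclic redirect_mu_j_acyclic not_least by blast
qed

end

theorem proposition5p18:
  fixes n :: nat and \<I> :: "nat set set" and j :: nat
  assumes "interval_hypergraph n \<I>"
    and "closed_under_intersection \<I>"
    and "j \<in> JJ \<I>"
  shows "join_irreducible (P_carrier \<I>) (P_le n \<I>) (A_or n \<I> j)"
proof -
  interpret interval_hypergraph_JJ_element n \<I> j
    using assms by unfold_locales
  show ?thesis using redirect_j_join_irreducible A_or_eq_redirect by simp
qed

end
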